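(* Let $A,B,C,D,E$ be five distinct points in the plane, not all collinear, such that $$AB\parallel EC,\quad BC\parallel AD,\quad CD\parallel BE,\quad DE\parallel CA,\quad EA\parallel DB.$$ Then $ABCDE$ is either an affine regular pentagon or an affine regular star pentagon. That is, there exist an affine bijection $f$ of the plane and a regular pentagon with vertices $V_0,\dots,V_4$ in cyclic order such that either $$(A,B,C,D,E)=(f(V_0),f(V_1),f(V_2),f(V_3),f(V_4))$$ or $$(A,B,C,D,E)=(f(V_0),f(V_2),f(V_4),f(V_1),f(V_3)).$$
   Context: An affine map of the plane is a bijection of the plane that maps collinear points to collinear points. $XY\parallel ZW$ means that the line through $X,Y$ is parallel to the line through $Z,W$. *)

theory Defs
  imports "HOL-Analysis.Analysis"
begin

definition line_through :: "complex \<Rightarrow> complex \<Rightarrow> complex set" where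
  "line_through X Y = affine hull {X, Y}"

text \<open>XY parallel ZW: the line ZW is a translate of the line XY (coincidence allowed).\<close>
definition par :: "complex \<Rightarrow> complex \<Rightarrow> complex \<Rightarrow> complex \<Rightarrow> bool" where
  "par X Y Z W \<longleftrightarrow> (\<exists>v. line_through Z W = (\<lambda>p. v + p) ` line_through X Y)"

definition affine_map :: "(complex \<Rightarrow> complex) \<Rightarrow> bool" where
  "affine_map f \<longleftrightarrow> bij f \<and>
     (\<forall>x y z. collinear {x, y, z} \<longrightarrow> collinear {f x, f y, f z})"

definition regular_pentagon :: "(nat \<Rightarrow> complex) \<Rightarrow> bool" where
  "regular_pentagon V \<longleftrightarrow> (\<exists>c w \<omega>. w \<noteq> 0 \<and>
     (\<omega> = cis (2 * pi / 5) \<or> \<omega> = cis (- 2 * pi / 5)) \<and>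
     (\<forall>k<5. V k = c + w * \<omega> ^ k))"

end

theory Submission
  imports Defs
begin

text \<open>Take \<open>A\<close> as origin and \<open>u = B - A\<close>, \<open>v = C - A\<close> as an affine frame; it is
  non-degenerate because the five points are not collinear. Four of the parallelisms force
  \<open>D = A + t u - t v\<close> and \<open>E = A + t u + v\<close> with \<open>t\<^sup>2 + t - 1 = 0\<close> (the fifth then holds
  automatically). For a fifth root of unity \<open>\<zeta> \<noteq> 1\<close>, the points \<open>1, \<zeta>, \<dots>, \<zeta>\<^sup>4\<close> satisfy the same
  relations in the frame \<open>(1; \<zeta> - 1, \<zeta>\<^sup>2 - 1)\<close> with \<open>t = \<zeta>\<^sup>2 + \<zeta>\<^sup>3\<close>, and the two roots of
  \<open>t\<^sup>2 + t - 1\<close> arise from \<open>\<zeta> = \<omega>\<close> (convex pentagon) and \<open>\<zeta> = \<omega>\<^sup>2\<close> (star pentagon), where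
  \<open>\<omega> = cis (2\<pi>/5)\<close>. The affine map between the two frames carries the regular pentagon
  onto \<open>ABCDE\<close>.\<close>

definition wedge :: "complex \<Rightarrow> complex \<Rightarrow> real" where
  "wedge p q = Re p * Im q - Im p * Re q"

lemma wedge_real_combination:
  "wedge (of_real a * u + of_real b * v) (of_real c * u + of_real d * v) = (a * d - b * c) * wedge u v"
  by (simp add: wedge_def algebra_simps)

lemma wedge_diff_coords:
  assumes "P = A + of_real px * u + of_real py * v" "Q = A + of_real qx * u + of_real qy * v"
    and "R = A + of_real rx * u + of_real ry * v" "S = A + of_real sx * u + of_real sy * v"
  shows "wedge (P - Q) (R - S) = ((px - qx) * (ry - sy) - (py - qy) * (rx - sx)) * wedge u v"
proof -
  have "P - Q = of_real (px - qx) * u + of_real (py - qy) * v"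
    and "R - S = of_real (rx - sx) * u + of_real (ry - sy) * v"
    using assms by (simp_all add: algebra_simps)
  then show ?thesis
    by (simp only: wedge_real_combination)
qed

lemma wedge_mult_self: "wedge p (z * p) = Im z * (cmod p)\<^sup>2"
  unfolding cmod_power2 by (simp add: wedge_def power2_eq_square algebra_simps)

lemma wedge_cramer:
  assumes "wedge u v \<noteq> 0"
  shows "w = of_real (wedge w v / wedge u v) * u + of_real (wedge u w / wedge u v) * v"
proof -
  have "Re w * wedge u v = wedge w v * Re u + wedge u w * Re v"
    and "Im w * wedge u v = wedge w v * Im u + wedge u w * Im v"
    by (simp_all add: wedge_def algebra_simps)
  with assms show ?thesis
    by (simp add: complex_eq_iff field_simps)
qed

lemma wedge_eq_0_imp_real_multiple:
  assumes "wedge p w = 0" "p \<noteq> 0"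
  shows "\<exists>k. w = of_real k * p"
proof
  have "Im (w / p) = 0"
    using assms(1) by (simp add: Im_divide wedge_def algebra_simps)
  then show "w = of_real (Re (w / p)) * p"
    using assms(2) by (metis complex_is_Real_iff nonzero_eq_divide_eq of_real_Re)
qed

lemma par_imp_wedge_eq_0:
  assumes "par X Y Z W"
  shows "wedge (X - Y) (Z - W) = 0"
proof -
  obtain v where "affine hull {Z, W} = (\<lambda>p. v + p) ` (affine hull {X, Y})"
    using assms unfolding par_def line_through_def by blast
  then have "Z \<in> (\<lambda>p. v + p) ` (affine hull {X, Y})" "W \<in> (\<lambda>p. v + p) ` (affine hull {X, Y})"
    using hull_subset[of "{Z, W}" affine] by auto
  then obtain s r where "Z = v + (X + s *\<^sub>R (Y - X))" "W = v + (X + r *\<^sub>R (Y - X))"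
    unfolding affine_hull_2_alt by blast
  then have "Z - W = (r - s) *\<^sub>R (X - Y)"
    by (simp only:) (simp add: algebra_simps)
  then show ?thesis
    by (simp add: scaleR_conv_of_real wedge_mult_self)
qed

text \<open>The real-linear map sending \<open>p\<close> to \<open>u\<close> and \<open>q\<close> to \<open>v\<close> (by Cramer's rule), provided
  \<open>wedge p q \<noteq> 0\<close>.\<close>
definition frame_map :: "complex \<Rightarrow> complex \<Rightarrow> complex \<Rightarrow> complex \<Rightarrow> complex \<Rightarrow> complex" where
  "frame_map p q u v w = of_real (wedge w q / wedge p q) * u + of_real (wedge p w / wedge p q) * v"

lemma linear_frame_map: "linear (frame_map p q u v)"
proof (rule linearI)
  have "wedge (a + b) q = wedge a q + wedge b q" "wedge p (a + b) = wedge p a + wedge p b"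
    and "wedge (c *\<^sub>R a) q = c * wedge a q" "wedge p (c *\<^sub>R a) = c * wedge p a" for a b c
    by (simp_all add: wedge_def algebra_simps)
  then show "frame_map p q u v (a + b) = frame_map p q u v a + frame_map p q u v b"
    and "frame_map p q u v (c *\<^sub>R a) = c *\<^sub>R frame_map p q u v a" for a b c
    by (simp_all add: frame_map_def add_divide_distrib scaleR_conv_of_real algebra_simps)
qed

lemma frame_map_real_combination:
  assumes "wedge p q \<noteq> 0"
  shows "frame_map p q u v (of_real x * p + of_real y * q) = of_real x * u + of_real y * v"
proof -
  have "wedge (of_real x * p + of_real y * q) q = x * wedge p q"
    and "wedge p (of_real x * p + of_real y * q) = y * wedge p q"
    by (simp_all add: wedge_def algebra_simps)
  with assms show ?thesis
    by (simp add: frame_map_def)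
qed

lemma frame_map_inverse:
  assumes "wedge p q \<noteq> 0" "wedge u v \<noteq> 0"
  shows "frame_map u v p q (frame_map p q u v w) = w"
  unfolding frame_map_def[of p q u v] frame_map_real_combination[OF assms(2)]
  using wedge_cramer[OF assms(1)] by simp

lemma bij_frame_map:
  assumes "wedge p q \<noteq> 0" "wedge u v \<noteq> 0"
  shows "bij (frame_map p q u v)"
  by (rule o_bij[of "frame_map u v p q"]) (simp_all add: fun_eq_iff frame_map_inverse assms)

lemma affine_map_translated_linear:
  assumes "linear L" "bij L"
  shows "affine_map (\<lambda>w. c + L w)"
  unfolding affine_map_def
proof (intro conjI allI impI)
  show "bij (\<lambda>w. c + L w)"
    using assms(2) bij_comp[of L "\<lambda>w. c + w"] by (simp add: o_def bij_plus)
next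
  fix x y z :: complex
  assume "collinear {x, y, z}"
  then obtain a d where ad: "\<forall>p\<in>{x, y, z}. \<exists>s. p = a + s *\<^sub>R d"
    unfolding collinear_alt by blast
  have "\<exists>s. c + L p = (c + L a) + s *\<^sub>R L d" if "p \<in> {x, y, z}" for p
    using ad that by (metis add.assoc linear_add linear_scale assms(1))
  then show "collinear {c + L x, c + L y, c + L z}"
    unfolding collinear_alt by blast
qed

lemma affine_map_between_frames:
  assumes "wedge p q \<noteq> 0" "wedge u v \<noteq> 0"
  obtains f where "affine_map f"
    and "\<And>x y. f (z + of_real x * p + of_real y * q) = a + of_real x * u + of_real y * v"
proof
  let ?L = "frame_map p q u v"
  show "affine_map (\<lambda>w. (a - ?L z) + ?L w)"
    by (rule affine_map_translated_linear[OF linear_frame_map bij_frame_map[OF assms]])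
  show "(a - ?L z) + ?L (z + of_real x * p + of_real y * q) = a + of_real x * u + of_real y * v" for x y
    using frame_map_real_combination[OF assms(1), of u v x y] linear_add[OF linear_frame_map]
    by (simp add: add.assoc)
qed

lemma wedge_ne_0_if_not_collinear_pentagon:
  assumes "A \<noteq> B" "B \<noteq> C" "\<not> collinear {A, B, C, D, E}"
    and "par A B E C" "par B C A D"
  shows "wedge (B - A) (C - A) \<noteq> 0"
proof
  assume "wedge (B - A) (C - A) = 0"
  then obtain k where k: "C - A = of_real k * (B - A)"
    using wedge_eq_0_imp_real_multiple assms(1) by force
  obtain m where m: "E - C = of_real m * (A - B)"
    using wedge_eq_0_imp_real_multiple[OF par_imp_wedge_eq_0[OF assms(4)]] assms(1) by force
  obtain n where n: "A - D = of_real n * (B - C)"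
    using wedge_eq_0_imp_real_multiple[OF par_imp_wedge_eq_0[OF assms(5)]] assms(2) by force
  have "A = A + 0 *\<^sub>R (B - A)" "B = A + 1 *\<^sub>R (B - A)"
    by simp_all
  moreover have "C = A + k *\<^sub>R (B - A)"
    and "D = A + (n * (k - 1)) *\<^sub>R (B - A)" "E = A + (k - m) *\<^sub>R (B - A)"
    using k m n unfolding scaleR_conv_of_real of_real_mult of_real_diff of_real_1 by - algebra+
  ultimately have "collinear {A, B, C, D, E}"
    unfolding collinear_alt by blast
  with assms(3) show False ..
qed

lemma parallel_pentagon_coordinates:
  assumes frame: "wedge (B - A) (C - A) \<noteq> 0"
    and "par A B E C" "par B C A D" "par C D B E" "par D E C A"
  obtains t where "t\<^sup>2 + t - 1 = 0"
    and "D = A + of_real t * (B - A) - of_real t * (C - A)"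
    and "E = A + of_real t * (B - A) + (C - A)"
proof -
  define u v where "u = B - A" and "v = C - A"
  define d1 d2 e1 e2 where "d1 = wedge (D - A) v / wedge u v" and "d2 = wedge u (D - A) / wedge u v"
    and "e1 = wedge (E - A) v / wedge u v" and "e2 = wedge u (E - A) / wedge u v"
  have A: "A = A + of_real 0 * u + of_real 0 * v"
    and B: "B = A + of_real 1 * u + of_real 0 * v"
    and C: "C = A + of_real 0 * u + of_real 1 * v"
    by (simp_all add: u_def v_def)
  have D: "D = A + of_real d1 * u + of_real d2 * v"
    and E: "E = A + of_real e1 * u + of_real e2 * v"
    using wedge_cramer[OF frame, of "D - A"] wedge_cramer[OF frame, of "E - A"]
    by (simp_all add: u_def v_def d1_def d2_def e1_def e2_def algebra_simps)
  have "(- (e2 - 1)) * wedge u v = 0"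
    using wedge_diff_coords[OF A B E C] par_imp_wedge_eq_0[OF assms(2)] by simp
  moreover have "(- d2 - d1) * wedge u v = 0"
    using wedge_diff_coords[OF B C A D] par_imp_wedge_eq_0[OF assms(3)] by simp
  moreover have "(d1 * e2 - (1 - d2) * (1 - e1)) * wedge u v = 0"
    using wedge_diff_coords[OF C D B E] par_imp_wedge_eq_0[OF assms(4)] by simp
  moreover have "(d1 - e1) * wedge u v = 0"
    using wedge_diff_coords[OF D E C A] par_imp_wedge_eq_0[OF assms(5)] by simp
  ultimately have "e2 = 1" "d2 = - d1" "e1 = d1" "d1 * e2 - (1 - d2) * (1 - e1) = 0"
    using frame by (simp_all add: u_def v_def)
  then have "d1\<^sup>2 + d1 - 1 = 0"
    by (simp add: power2_eq_square algebra_simps)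
  moreover have "D = A + of_real d1 * u - of_real d1 * v" "E = A + of_real d1 * u + v"
    using D E \<open>e2 = 1\<close> \<open>d2 = - d1\<close> \<open>e1 = d1\<close> by simp_all
  ultimately show thesis
    using that u_def v_def by blast
qed

lemma sum_of_fifth_root_of_unity:
  fixes \<zeta> :: complex
  assumes "\<zeta> ^ 5 = 1" "\<zeta> \<noteq> 1"
  shows "1 + \<zeta> + \<zeta>\<^sup>2 + \<zeta>^3 + \<zeta>^4 = 0"
proof -
  have "(\<zeta> - 1) * (1 + \<zeta> + \<zeta>\<^sup>2 + \<zeta>^3 + \<zeta>^4) = \<zeta> ^ 5 - 1"
    by (simp add: algebra_simps eval_nat_numeral)
  with assms show ?thesis
    by simp
qed

lemma golden_quadratic_roots:
  fixes \<zeta> t :: complex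
  assumes "\<zeta> ^ 5 = 1" "\<zeta> \<noteq> 1" "t\<^sup>2 + t - 1 = 0"
  shows "t = \<zeta>\<^sup>2 + \<zeta>^3 \<or> t = (\<zeta>\<^sup>2)\<^sup>2 + (\<zeta>\<^sup>2)^3"
proof -
  have "t\<^sup>2 + t - 1 = (t - (\<zeta>\<^sup>2 + \<zeta>^3)) * (t - ((\<zeta>\<^sup>2)\<^sup>2 + (\<zeta>\<^sup>2)^3))"
    using sum_of_fifth_root_of_unity[OF assms(1,2)] assms(1) by algebra
  with assms(3) show ?thesis
    by simp
qed

lemma pentagon_affine_image:
  fixes \<zeta> :: complex
  assumes "\<zeta> ^ 5 = 1" "Im \<zeta> \<noteq> 0" "wedge (B - A) (C - A) \<noteq> 0" "of_real t = \<zeta>\<^sup>2 + \<zeta>^3"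
    and "D = A + of_real t * (B - A) - of_real t * (C - A)" "E = A + of_real t * (B - A) + (C - A)"
  obtains f where "affine_map f" "f 1 = A" "f \<zeta> = B" "f (\<zeta>\<^sup>2) = C" "f (\<zeta>^3) = D" "f (\<zeta>^4) = E"
proof -
  have "\<zeta>\<^sup>2 - 1 = (\<zeta> + 1) * (\<zeta> - 1)"
    by (simp add: power2_eq_square algebra_simps)
  moreover have "\<zeta> - 1 \<noteq> 0"
    using assms(2) by auto
  ultimately have "wedge (\<zeta> - 1) (\<zeta>\<^sup>2 - 1) \<noteq> 0"
    using assms(2) by (simp add: wedge_mult_self)
  then obtain f where f: "affine_map f" and f_coords: "\<And>x y.
      f (1 + of_real x * (\<zeta> - 1) + of_real y * (\<zeta>\<^sup>2 - 1)) = A + of_real x * (B - A) + of_real y * (C - A)"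
    using affine_map_between_frames assms(3) by blast
  have "\<zeta>^3 = 1 + of_real t * (\<zeta> - 1) + of_real (- t) * (\<zeta>\<^sup>2 - 1)"
    unfolding of_real_minus assms(4) using assms(1) by algebra
  moreover have "\<zeta>^4 = 1 + of_real t * (\<zeta> - 1) + of_real 1 * (\<zeta>\<^sup>2 - 1)"
    unfolding of_real_1 assms(4) by algebra
  ultimately show thesis
    using that[OF f] f_coords[of 0 0] f_coords[of 1 0] f_coords[of 0 1] f_coords[of t "- t"] f_coords[of t 1]
    by (simp add: assms(5,6))
qed

definition pentagon_root :: complex where
  "pentagon_root = cis (2 * pi / 5)"

lemma pentagon_root_power_5: "pentagon_root ^ 5 = 1"
  unfolding pentagon_root_def Complex.DeMoivre by simp

lemma pentagon_root_sq_powers: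
  "(pentagon_root\<^sup>2) ^ 5 = 1" "(pentagon_root\<^sup>2)\<^sup>2 = pentagon_root ^ 4"
  "(pentagon_root\<^sup>2) ^ 3 = pentagon_root" "(pentagon_root\<^sup>2) ^ 4 = pentagon_root ^ 3"
proof -
  have "pentagon_root ^ (k + 5) = pentagon_root ^ k" for k
    using pentagon_root_power_5 by (simp add: power_add)
  from this[of 1] this[of 3] this[of 5] pentagon_root_power_5 show
    "(pentagon_root\<^sup>2) ^ 5 = 1" "(pentagon_root\<^sup>2)\<^sup>2 = pentagon_root ^ 4"
    "(pentagon_root\<^sup>2) ^ 3 = pentagon_root" "(pentagon_root\<^sup>2) ^ 4 = pentagon_root ^ 3"
    by (simp_all flip: power_mult)
qed

lemma Im_pentagon_root_ne_0: "Im pentagon_root \<noteq> 0" "Im (pentagon_root\<^sup>2) \<noteq> 0"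
  unfolding pentagon_root_def Complex.DeMoivre
  using sin_gt_zero[of "2 * pi / 5"] sin_gt_zero[of "4 * pi / 5"] by simp_all

lemma regular_pentagon_pentagon_root_powers: "regular_pentagon (\<lambda>k. pentagon_root ^ k)"
  unfolding regular_pentagon_def
  by (intro exI[of _ 0] exI[of _ 1] exI[of _ pentagon_root]) (simp add: pentagon_root_def)

lemma affine_regular_pentagon_of_coordinates:
  assumes frame: "wedge (B - A) (C - A) \<noteq> 0" and t: "t\<^sup>2 + t - 1 = 0"
    and D: "D = A + of_real t * (B - A) - of_real t * (C - A)"
    and E: "E = A + of_real t * (B - A) + (C - A)"
  shows "\<exists>f V. affine_map f \<and> regular_pentagon V \<and>
           ((A, B, C, D, E) = (f (V 0), f (V 1), f (V 2), f (V 3), f (V 4)) \<or>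
            (A, B, C, D, E) = (f (V 0), f (V 2), f (V 4), f (V 1), f (V 3)))"
proof -
  let ?\<omega> = pentagon_root
  have "(of_real t)\<^sup>2 + of_real t - 1 = (0 :: complex)"
    using arg_cong[OF t, of "of_real :: real \<Rightarrow> complex"] by simp
  moreover have "?\<omega> \<noteq> 1"
    using Im_pentagon_root_ne_0 by auto
  ultimately consider "of_real t = ?\<omega>\<^sup>2 + ?\<omega>^3" | "of_real t = (?\<omega>\<^sup>2)\<^sup>2 + (?\<omega>\<^sup>2)^3"
    using golden_quadratic_roots pentagon_root_power_5 by blast
  then show ?thesis
  proof cases
    case 1
    then obtain f where "affine_map f" "f 1 = A" "f ?\<omega> = B" "f (?\<omega>\<^sup>2) = C" "f (?\<omega>^3) = D" "f (?\<omega>^4) = E"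
      using pentagon_affine_image[OF pentagon_root_power_5 Im_pentagon_root_ne_0(1) frame _ D E]
      by blast
    then show ?thesis
      using regular_pentagon_pentagon_root_powers
      by (intro exI[of _ f] exI[of _ "\<lambda>k. ?\<omega> ^ k"]) simp
  next
    case 2
    then obtain f where "affine_map f" "f 1 = A" "f (?\<omega>\<^sup>2) = B" "f (?\<omega>^4) = C" "f ?\<omega> = D" "f (?\<omega>^3) = E"
      using pentagon_affine_image[OF pentagon_root_sq_powers(1) Im_pentagon_root_ne_0(2) frame _ D E]
      unfolding pentagon_root_sq_powers by blast
    then show ?thesis
      using regular_pentagon_pentagon_root_powers
      by (intro exI[of _ f] exI[of _ "\<lambda>k. ?\<omega> ^ k"]) simp
  qed
qed

theorem proposition2:
  fixes A B C D E :: complex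
  assumes "distinct [A, B, C, D, E]"
    and "\<not> collinear {A, B, C, D, E}"
    and "par A B E C" and "par B C A D" and "par C D B E"
    and "par D E C A" and "par E A D B"
  shows "\<exists>f V. affine_map f \<and> regular_pentagon V \<and>
           ((A, B, C, D, E) = (f (V 0), f (V 1), f (V 2), f (V 3), f (V 4)) \<or>
            (A, B, C, D, E) = (f (V 0), f (V 2), f (V 4), f (V 1), f (V 3)))"
proof -
  have frame: "wedge (B - A) (C - A) \<noteq> 0"
    using assms(1-4) by (intro wedge_ne_0_if_not_collinear_pentagon) auto
  then obtain t where "t\<^sup>2 + t - 1 = 0"
    and "D = A + of_real t * (B - A) - of_real t * (C - A)" "E = A + of_real t * (B - A) + (C - A)"
    using parallel_pentagon_coordinates assms(3-6) by blast
  then show ?thesis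
    using affine_regular_pentagon_of_coordinates[OF frame] by blast
qed

end
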